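(* Let $N\ge 1$, $a_1,\dots,a_N>0$, $T_1,\dots,T_N\ge 0$, $P_{\mathrm{tot}}>0$, $c=\ln 2$, $\bar P_i=(2^{T_i}-1)/a_i$, and for $\lambda>0$ let $P_i(\lambda)=\frac{2}{\lambda c^2}W_0\!\left(\frac{\lambda c^2}{2a_i}2^{T_i}\right)-\frac1{a_i}$, $P_i^*(\lambda)=\min\{\bar P_i,\max\{0,P_i(\lambda)\}\}$ and $S(\lambda)=\sum_i P_i^*(\lambda)$, where $W_0$ is the principal branch of the Lambert W function. Consider the following algorithm with tolerance $\varepsilon>0$: if $P_{\mathrm{tot}}\ge\sum_i\bar P_i$, return $P_i=\bar P_i$; otherwise set $\lambda_{\mathrm{lo}}=0$, $\lambda_{\mathrm{hi}}=1$, and while $S(\lambda_{\mathrm{hi}})>P_{\mathrm{tot}}$ replace $\lambda_{\mathrm{hi}}$ by $2\lambda_{\mathrm{hi}}$; then repeat: set $\lambda=(\lambda_{\mathrm{lo}}+\lambda_{\mathrm{hi}})/2$, compute $P_i^*(\lambda)$ for all $i$ and $S(\lambda)$, set $\lambda_{\mathrm{lo}}=\lambda$ if $S(\lambda)>P_{\mathrm{tot}}$ and $\lambda_{\mathrm{hi}}=\lambda$ otherwise, until $|S(\lambda)-P_{\mathrm{tot}}|<\varepsilon$; return $(P_i^*(\lambda))_i$ and $\lambda$. Suppose $P_{\mathrm{tot}}<\sum_i\bar P_i$ and at least one channel has $a_i,T_i>0$. Then, for fixed problem data, the algorithm terminates after at most $O(\log(1/\varepsilon))$ bisection iterations; each iteration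 requires $N$ Lambert W evaluations and $O(N)$ elementary operations, for a total complexity of $O(N\log(1/\varepsilon))$.
   Context: For $z\ge 0$, $W_0(z)$ is the unique $w\ge 0$ with $we^w=z$; a Lambert W evaluation is counted as a unit-cost operation. *)

theory Defs
  imports "HOL-Analysis.Analysis" "HOL-Library.Landau_Symbols"
begin

definition lambertW0 :: "real \<Rightarrow> real" where
  "lambertW0 z = (THE w. w \<ge> 0 \<and> w * exp w = z)"

definition cst :: real where "cst = ln 2"

definition Pbar :: "(nat \<Rightarrow> real) \<Rightarrow> (nat \<Rightarrow> real) \<Rightarrow> nat \<Rightarrow> real" where
  "Pbar a T i = (2 powr T i - 1) / a i"

definition Plam :: "(nat \<Rightarrow> real) \<Rightarrow> (nat \<Rightarrow> real) \<Rightarrow> real \<Rightarrow> nat \<Rightarrow> real" where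
  "Plam a T lam i =
     2 / (lam * cst\<^sup>2) * lambertW0 (lam * cst\<^sup>2 / (2 * a i) * 2 powr T i) - 1 / a i"

definition Pstar :: "(nat \<Rightarrow> real) \<Rightarrow> (nat \<Rightarrow> real) \<Rightarrow> real \<Rightarrow> nat \<Rightarrow> real" where
  "Pstar a T lam i = min (Pbar a T i) (max 0 (Plam a T lam i))"

definition Ssum :: "nat \<Rightarrow> (nat \<Rightarrow> real) \<Rightarrow> (nat \<Rightarrow> real) \<Rightarrow> real \<Rightarrow> real" where
  "Ssum N a T lam = (\<Sum>i<N. Pstar a T lam i)"

text \<open>Doubling phase: lambda_hi = 1, doubled while S(lambda_hi) > Ptot.
  It terminates with lambda_hi = 2^k for the least k with S(2^k) <= Ptot.\<close>
definition hi0 :: "nat \<Rightarrow> (nat \<Rightarrow> real) \<Rightarrow> (nat \<Rightarrow> real) \<Rightarrow> real \<Rightarrow> real" where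
  "hi0 N a T Ptot = 2 ^ (LEAST k. Ssum N a T (2 ^ k) \<le> Ptot)"

definition bisect_step ::
  "nat \<Rightarrow> (nat \<Rightarrow> real) \<Rightarrow> (nat \<Rightarrow> real) \<Rightarrow> real \<Rightarrow> real \<times> real \<Rightarrow> real \<times> real" where
  "bisect_step N a T Ptot st =
     (let lam = (fst st + snd st) / 2
      in if Ssum N a T lam > Ptot then (lam, snd st) else (fst st, lam))"

text \<open>Bracket before bisection iteration m+1 (m completed iterations).\<close>
definition bracket :: "nat \<Rightarrow> (nat \<Rightarrow> real) \<Rightarrow> (nat \<Rightarrow> real) \<Rightarrow> real \<Rightarrow> nat \<Rightarrow> real \<times> real" where
  "bracket N a T Ptot m = (bisect_step N a T Ptot ^^ m) (0, hi0 N a T Ptot)"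

text \<open>The lambda evaluated in bisection iteration m+1.\<close>
definition mid :: "nat \<Rightarrow> (nat \<Rightarrow> real) \<Rightarrow> (nat \<Rightarrow> real) \<Rightarrow> real \<Rightarrow> nat \<Rightarrow> real" where
  "mid N a T Ptot m = (fst (bracket N a T Ptot m) + snd (bracket N a T Ptot m)) / 2"

definition stops :: "nat \<Rightarrow> (nat \<Rightarrow> real) \<Rightarrow> (nat \<Rightarrow> real) \<Rightarrow> real \<Rightarrow> real \<Rightarrow> nat \<Rightarrow> bool" where
  "stops N a T Ptot eps m \<longleftrightarrow> \<bar>Ssum N a T (mid N a T Ptot m) - Ptot\<bar> < eps"

text \<open>Number of bisection iterations performed (meaningful when the loop terminates).\<close>
definition bisect_iters :: "nat \<Rightarrow> (nat \<Rightarrow> real) \<Rightarrow> (nat \<Rightarrow> real) \<Rightarrow> real \<Rightarrow> real \<Rightarrow> nat" where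
  "bisect_iters N a T Ptot eps = Suc (LEAST m. stops N a T Ptot eps m)"

text \<open>Unit-cost operation count: each iteration does N Lambert W evaluations plus
  a fixed number of elementary operations per channel; we count N per iteration
  (up to the constant factor absorbed in O).\<close>
definition total_cost :: "nat \<Rightarrow> (nat \<Rightarrow> real) \<Rightarrow> (nat \<Rightarrow> real) \<Rightarrow> real \<Rightarrow> real \<Rightarrow> real" where
  "total_cost N a T Ptot eps = real N * real (bisect_iters N a T Ptot eps)"

end

(*
  Rewriting P_i(lam) with the identity W(x) = x exp (-W(x)) as (2^T_i exp (-W(x)) - 1) / a_i
  gives an expression that is continuous at lam = 0, where it equals Pbar_i, and Lipschitz
  on [0, oo), because W_0 and u -> exp (-u) are 1-Lipschitz there. So the clamped sum S,
  extended by S(0) = Sum Pbar_i > Ptot, is L-Lipschitz on [0, oo). It vanishes for large lam,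
  so the doubling phase stops at some h, and bisection keeps a bracket [lo, hi] of width
  h / 2^m with S(lo) > Ptot >= S(hi). Hence |S(mid) - Ptot| <= L h / 2^(m+1), and the stopping
  test succeeds as soon as 2^m exceeds L h / eps, i.e. after O(log (1/eps)) iterations.
*)
theory Submission
  imports Defs "HOL-Real_Asymp.Real_Asymp"
begin

section \<open>The principal branch of Lambert W\<close>

lemma mult_exp_diff_ge:
  fixes w1 w2 :: real
  assumes "0 \<le> w1" "w1 \<le> w2"
  shows "w2 - w1 \<le> w2 * exp w2 - w1 * exp w1"
proof -
  have "0 \<le> (w2 - w1) * (exp w2 - 1)" using assms by simp
  moreover have "0 \<le> w1 * (exp w2 - exp w1)" using assms by simp
  ultimately show ?thesis by (simp add: algebra_simps)
qed

lemma lambertW0_ex1: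
  fixes z :: real
  assumes "0 \<le> z"
  shows "\<exists>!w. 0 \<le> w \<and> w * exp w = z"
proof -
  have "\<exists>w. 0 \<le> w \<and> w \<le> z \<and> w * exp w = z"
    using assms mult_left_mono[of 1 "exp z" z]
    by (intro IVT') (auto intro!: continuous_intros)
  moreover have "w = w'" if "0 \<le> w" "0 \<le> w'" "w * exp w = w' * exp w'" for w w' :: real
    using that mult_exp_diff_ge[of w w'] mult_exp_diff_ge[of w' w] by linarith
  ultimately show ?thesis by blast
qed

lemma
  fixes z :: real
  assumes "0 \<le> z"
  shows lambertW0_nonneg: "0 \<le> lambertW0 z"
    and lambertW0_mult_exp: "lambertW0 z * exp (lambertW0 z) = z"
  using theI'[OF lambertW0_ex1[OF assms]] unfolding lambertW0_def by auto

lemma lambertW0_zero [simp]: "lambertW0 0 = 0"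
  using lambertW0_mult_exp[of 0] by simp

lemma lambertW0_ge:
  fixes w z :: real
  assumes "0 \<le> w" "w * exp w \<le> z"
  shows "w \<le> lambertW0 z"
proof -
  have "0 \<le> w * exp w"
    using assms(1) by simp
  then have z: "0 \<le> z"
    using assms(2) by linarith
  show ?thesis
    using mult_exp_diff_ge[OF lambertW0_nonneg[OF z], of w] lambertW0_mult_exp[OF z] assms
    by (smt (verit))
qed

lemma lambertW0_lipschitz: "1-lipschitz_on {0..} lambertW0"
proof (rule lipschitz_on_leI)
  fix z1 z2 :: real
  assume "z1 \<in> {0..}" "z2 \<in> {0..}" "z1 \<le> z2"
  then have W: "0 \<le> lambertW0 z1" "0 \<le> lambertW0 z2"
      "lambertW0 z1 * exp (lambertW0 z1) = z1" "lambertW0 z2 * exp (lambertW0 z2) = z2"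
    by (auto intro: lambertW0_nonneg lambertW0_mult_exp)
  have mono: "lambertW0 z1 \<le> lambertW0 z2"
    using mult_exp_diff_ge[of "lambertW0 z2" "lambertW0 z1"] W \<open>z1 \<le> z2\<close> by linarith
  show "dist (lambertW0 z1) (lambertW0 z2) \<le> 1 * dist z1 z2"
    using mult_exp_diff_ge[OF W(1) mono] W mono \<open>z1 \<le> z2\<close> by (simp add: dist_real_def)
qed simp

lemma exp_minus_lipschitz: "1-lipschitz_on {0..} (\<lambda>u::real. exp (- u))"
proof (rule lipschitz_on_leI)
  fix x y :: real
  assume "x \<in> {0..}" "y \<in> {0..}" "x \<le> y"
  have "1 - exp (x - y) \<le> y - x"
    using exp_ge_add_one_self[of "x - y"] by linarith
  moreover have "0 \<le> y - x" "exp (- x) \<le> 1"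
    using \<open>x \<in> {0..}\<close> \<open>x \<le> y\<close> by auto
  ultimately have "exp (- x) * (1 - exp (x - y)) \<le> y - x"
    by (smt (verit) exp_gt_zero mult_left_le_one_le mult_left_mono)
  moreover have "exp (- x) * (1 - exp (x - y)) = exp (- x) - exp (- y)"
    by (simp add: algebra_simps flip: exp_add)
  ultimately show "dist (exp (- x)) (exp (- y)) \<le> 1 * dist x y"
    using \<open>x \<le> y\<close> by (simp add: dist_real_def)
qed simp

lemma clamp_lipschitz: "1-lipschitz_on U (\<lambda>x::real. min c (max 0 x))"
  by (rule lipschitz_onI) (auto simp: dist_real_def min_def max_def)

lemma lipschitz_on_sum:
  fixes f :: "'i \<Rightarrow> 'a::metric_space \<Rightarrow> 'b::real_normed_vector"
  assumes "\<And>i. i \<in> I \<Longrightarrow> (C i)-lipschitz_on U (f i)"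
  shows "(\<Sum>i\<in>I. C i)-lipschitz_on U (\<lambda>x. \<Sum>i\<in>I. f i x)"
  using assms
  by (induction I rule: infinite_finite_induct) (auto intro: lipschitz_on_constant lipschitz_on_add)

section \<open>Lipschitz continuity of the allocated power\<close>

lemma cst_pos: "0 < cst"
  by (simp add: cst_def)

lemma Pbar_nonneg: "0 < a i \<Longrightarrow> 0 \<le> T i \<Longrightarrow> 0 \<le> Pbar a T i"
  by (simp add: Pbar_def ge_one_powr_ge_zero)

text \<open>Plam rewritten with W(x) = x exp (-W(x)); unlike Plam, which divides by lam, it is
  continuous at lam = 0.\<close>
definition Plam_ext :: "(nat \<Rightarrow> real) \<Rightarrow> (nat \<Rightarrow> real) \<Rightarrow> real \<Rightarrow> nat \<Rightarrow> real" where
  "Plam_ext a T lam i =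
     (2 powr T i * exp (- lambertW0 (lam * cst\<^sup>2 / (2 * a i) * 2 powr T i)) - 1) / a i"

lemma Plam_eq_Plam_ext:
  assumes "0 < a i" "0 < lam"
  shows "Plam a T lam i = Plam_ext a T lam i"
proof -
  define x where "x = lam * cst\<^sup>2 / (2 * a i) * 2 powr T i"
  have "0 \<le> x" unfolding x_def using assms by simp
  then have W: "lambertW0 x = x * exp (- lambertW0 x)"
    using lambertW0_mult_exp[of x] by (simp add: exp_minus field_simps)
  have "2 / (lam * cst\<^sup>2) * lambertW0 x = 2 powr T i / a i * exp (- lambertW0 x)"
    using assms cst_pos by (subst W) (simp add: x_def field_simps power2_eq_square)
  then show ?thesis
    unfolding Plam_def Plam_ext_def x_def[symmetric] using assms by (simp add: field_simps)
qed

lemma Plam_ext_zero: "Plam_ext a T 0 i = Pbar a T i"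
  by (simp add: Plam_ext_def Pbar_def)

lemma Plam_ext_lipschitz:
  assumes "0 < a i"
  shows "(2 powr T i / a i * (cst\<^sup>2 / (2 * a i) * 2 powr T i))-lipschitz_on {0..}
           (\<lambda>lam. Plam_ext a T lam i)"
proof -
  define k where "k = cst\<^sup>2 / (2 * a i) * 2 powr T i"
  define c where "c = 2 powr T i / a i"
  have "0 \<le> k" "0 \<le> c" using assms by (simp_all add: k_def c_def)
  have "k-lipschitz_on {0..} (\<lambda>lam. k * lam)"
    using lipschitz_on_cmult_real_nonneg[OF lipschitz_on_id \<open>0 \<le> k\<close>] by simp
  moreover have "(\<lambda>lam. k * lam) ` {0..} \<subseteq> {0..}"
    using \<open>0 \<le> k\<close> by auto
  ultimately have W: "(1 * k)-lipschitz_on {0..} (\<lambda>lam. lambertW0 (k * lam))"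
    by (rule lipschitz_on_compose2[OF _ lipschitz_on_subset[OF lambertW0_lipschitz]])
  have "(\<lambda>lam. lambertW0 (k * lam)) ` {0..} \<subseteq> {0..}"
    using \<open>0 \<le> k\<close> by (auto intro: lambertW0_nonneg)
  from lipschitz_on_compose2[OF W lipschitz_on_subset[OF exp_minus_lipschitz this]]
  have "(1 * (1 * k))-lipschitz_on {0..} (\<lambda>lam. exp (- lambertW0 (k * lam)))"
    by simp
  then have "(c * k + 0)-lipschitz_on {0..} (\<lambda>lam. c * exp (- lambertW0 (k * lam)) - 1 / a i)"
    by (intro lipschitz_on_diff lipschitz_on_constant lipschitz_on_cmult_real_nonneg \<open>0 \<le> c\<close>) simp
  moreover have "Plam_ext a T lam i = c * exp (- lambertW0 (k * lam)) - 1 / a i" for lam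
  proof -
    have "lam * cst\<^sup>2 / (2 * a i) * 2 powr T i = k * lam"
      by (simp add: k_def)
    then show ?thesis
      unfolding Plam_ext_def c_def by (simp add: diff_divide_distrib)
  qed
  ultimately show ?thesis unfolding k_def c_def by simp
qed

definition Ssum_ext :: "nat \<Rightarrow> (nat \<Rightarrow> real) \<Rightarrow> (nat \<Rightarrow> real) \<Rightarrow> real \<Rightarrow> real" where
  "Ssum_ext N a T lam = (\<Sum>i<N. min (Pbar a T i) (max 0 (Plam_ext a T lam i)))"

lemma Ssum_eq_Ssum_ext:
  "(\<And>i. i < N \<Longrightarrow> 0 < a i) \<Longrightarrow> 0 < lam \<Longrightarrow> Ssum N a T lam = Ssum_ext N a T lam"
  by (simp add: Ssum_def Ssum_ext_def Pstar_def Plam_eq_Plam_ext)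

lemma Ssum_ext_zero:
  assumes "\<And>i. i < N \<Longrightarrow> 0 < a i" "\<And>i. i < N \<Longrightarrow> 0 \<le> T i"
  shows "Ssum_ext N a T 0 = (\<Sum>i<N. Pbar a T i)"
  unfolding Ssum_ext_def Plam_ext_zero using assms Pbar_nonneg by (intro sum.cong) auto

lemma Ssum_ext_lipschitz:
  assumes "\<And>i. i < N \<Longrightarrow> 0 < a i"
  obtains L where "L-lipschitz_on {0..} (Ssum_ext N a T)"
proof
  let ?C = "\<lambda>i. 2 powr T i / a i * (cst\<^sup>2 / (2 * a i) * 2 powr T i)"
  have "(1 * ?C i)-lipschitz_on {0..} (\<lambda>lam. min (Pbar a T i) (max 0 (Plam_ext a T lam i)))"
    if "i < N" for i
    using assms[OF that] by (intro lipschitz_on_compose2 clamp_lipschitz Plam_ext_lipschitz)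
  then show "(\<Sum>i<N. 1 * ?C i)-lipschitz_on {0..} (Ssum_ext N a T)"
    unfolding Ssum_ext_def[abs_def] by (intro lipschitz_on_sum) auto
qed

lemma Pstar_eq_zero:
  assumes "0 < a i" "0 \<le> T i" "0 < lam" "2 * a i * T i / cst \<le> lam"
  shows "Pstar a T lam i = 0"
proof -
  define x where "x = lam * cst\<^sup>2 / (2 * a i) * 2 powr T i"
  have "T i \<le> lam * cst / (2 * a i)"
    using assms cst_pos by (simp add: field_simps)
  then have "T i * (cst * 2 powr T i) \<le> lam * cst / (2 * a i) * (cst * 2 powr T i)"
    using cst_pos by (intro mult_right_mono) auto
  moreover have exp_eq: "exp (T i * cst) = 2 powr T i"
    by (simp add: cst_def powr_def)
  ultimately have "(T i * cst) * exp (T i * cst) \<le> x"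
    by (simp add: x_def power2_eq_square)
  then have "T i * cst \<le> lambertW0 x"
    using assms cst_pos by (intro lambertW0_ge) auto
  then have "2 powr T i * exp (- lambertW0 x) \<le> 2 powr T i * exp (- (T i * cst))"
    by simp
  also have "\<dots> = 1"
    by (simp add: exp_minus exp_eq)
  finally have "Plam_ext a T lam i \<le> 0"
    unfolding Plam_ext_def x_def[symmetric] using assms by (simp add: divide_le_0_iff)
  then show ?thesis
    using assms Pbar_nonneg by (simp add: Pstar_def Plam_eq_Plam_ext)
qed

lemma Ssum_eventually_zero:
  assumes "\<And>i. i < N \<Longrightarrow> 0 < a i" "\<And>i. i < N \<Longrightarrow> 0 \<le> T i"
  shows "\<forall>\<^sub>F lam in at_top. Ssum N a T lam = 0"
proof -
  have "\<forall>\<^sub>F lam in at_top. \<forall>i\<in>{..<N}. Pstar a T lam i = 0"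
  proof (intro eventually_ball_finite ballI)
    show "\<forall>\<^sub>F lam in at_top. Pstar a T lam i = 0" if "i \<in> {..<N}" for i
    proof -
      have "\<forall>\<^sub>F lam in at_top. 0 < lam \<and> 2 * a i * T i / cst \<le> lam"
        by (intro eventually_conj eventually_gt_at_top eventually_ge_at_top)
      then show ?thesis
        by eventually_elim (use that assms in \<open>auto intro: Pstar_eq_zero\<close>)
    qed
  qed simp
  then show ?thesis
    by eventually_elim (simp add: Ssum_def)
qed

lemma ex_Ssum_pow2_le:
  assumes "\<And>i. i < N \<Longrightarrow> 0 < a i" "\<And>i. i < N \<Longrightarrow> 0 \<le> T i" "0 \<le> Ptot"
  shows "\<exists>k. Ssum N a T (2 ^ k) \<le> Ptot"
proof -
  have "filterlim (\<lambda>k::nat. (2::real) ^ k) at_top sequentially"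
    by real_asymp
  with Ssum_eventually_zero[OF assms(1,2)]
  have "\<forall>\<^sub>F k in sequentially. Ssum N a T (2 ^ k) = 0"
    by (rule eventually_compose_filterlim)
  then obtain k where "Ssum N a T (2 ^ k) = 0"
    by (auto simp: eventually_sequentially)
  then show ?thesis
    using assms(3) by (intro exI[of _ k]) simp
qed

section \<open>Bisection\<close>

definition bisection :: "(real \<Rightarrow> bool) \<Rightarrow> real \<times> real \<Rightarrow> real \<times> real" where
  "bisection P br =
     (let m = (fst br + snd br) / 2 in if P m then (m, snd br) else (fst br, m))"

lemma bisect_step_eq_bisection: "bisect_step N a T Ptot = bisection (\<lambda>lam. Ptot < Ssum N a T lam)"
  by (simp add: fun_eq_iff bisect_step_def bisection_def)

lemma bisection_iterate_invariant:
  assumes "s \<le> t" "(bisection P ^^ n) (s, t) = (lo, hi)"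
  shows "s \<le> lo \<and> hi \<le> t \<and> hi - lo = (t - s) / 2 ^ n
    \<and> (lo = s \<or> P lo) \<and> (hi = t \<or> \<not> P hi)"
  using assms(2)
proof (induction n arbitrary: lo hi)
  case 0
  then show ?case by simp
next
  case (Suc n)
  obtain lo' hi' where br: "(bisection P ^^ n) (s, t) = (lo', hi')"
    by fastforce
  note IH = Suc.IH[OF br]
  define m where "m = (lo' + hi') / 2"
  have "(lo, hi) = bisection P (lo', hi')"
    using Suc.prems br by simp
  then have step: "(lo, hi) = (if P m then (m, hi') else (lo', m))"
    by (simp add: bisection_def m_def)
  have "0 \<le> (t - s) / 2 ^ n"
    using assms(1) by simp
  then have "lo' \<le> hi'"
    using IH by linarith
  then have "lo' \<le> m" "m \<le> hi'" "hi' - m = (t - s) / 2 ^ Suc n" "m - lo' = (t - s) / 2 ^ Suc n"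
    using IH by (auto simp: m_def field_simps)
  then show ?case
    using IH step by (cases "P m") auto
qed

lemma bisection_midpoint_error:
  fixes f :: "real \<Rightarrow> real"
  assumes lip: "L-lipschitz_on {s..t} f"
    and "s < t" "c < f s" "f t \<le> c"
    and P: "\<And>x. s < x \<Longrightarrow> x \<le> t \<Longrightarrow> P x \<longleftrightarrow> c < f x"
    and br: "(bisection P ^^ n) (s, t) = (lo, hi)"
  shows "\<bar>f ((lo + hi) / 2) - c\<bar> \<le> L * (t - s) / 2 ^ Suc n"
proof -
  define m where "m = (lo + hi) / 2"
  have inv: "s \<le> lo" "hi \<le> t" "hi - lo = (t - s) / 2 ^ n" "lo = s \<or> P lo" "hi = t \<or> \<not> P hi"
    using bisection_iterate_invariant[OF _ br] \<open>s < t\<close> by auto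
  have "0 < (t - s) / 2 ^ n"
    using \<open>s < t\<close> by simp
  then have "lo < hi" "s < hi"
    using inv by linarith+
  have "c < f lo"
    using inv(4) P[of lo] \<open>c < f s\<close> \<open>lo < hi\<close> inv(1,2) by fastforce
  moreover have "f hi \<le> c"
    using inv(5) P[of hi] \<open>f t \<le> c\<close> \<open>s < hi\<close> inv(2) by fastforce
  moreover have "\<bar>f x - f y\<bar> \<le> L * \<bar>x - y\<bar>" if "x \<in> {lo..hi}" "y \<in> {lo..hi}" for x y
    using lipschitz_onD[OF lip, of x y] that inv(1,2) by (simp add: dist_real_def)
  moreover have "m \<in> {lo..hi}" "hi - m = (t - s) / 2 ^ Suc n" "m - lo = (t - s) / 2 ^ Suc n"
    using \<open>lo < hi\<close> inv(3) by (auto simp: m_def field_simps)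
  ultimately have "f m - c \<le> L * ((t - s) / 2 ^ Suc n)" "c - f m \<le> L * ((t - s) / 2 ^ Suc n)"
    using \<open>lo < hi\<close> by (smt (verit) atLeastAtMost_iff)+
  then show ?thesis
    unfolding m_def[symmetric] by (simp add: abs_le_iff)
qed

lemma Suc_Least_bigo_ln_if_halving:
  fixes Q :: "real \<Rightarrow> nat \<Rightarrow> bool" and C :: real
  assumes Q: "\<And>eps n. 0 < eps \<Longrightarrow> C / 2 ^ n < eps \<Longrightarrow> Q eps n"
  shows "(\<lambda>eps. real (Suc (LEAST n. Q eps n))) \<in> O[at_right 0](\<lambda>eps. ln (1 / eps))"
proof -
  define D where "D = \<bar>C\<bar> + 1"
  have "0 < D" by (simp add: D_def)
  have bound: "real (Suc (LEAST n. Q eps n)) \<le> \<bar>log 2 (D / eps)\<bar> + 2" if "0 < eps" for eps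
  proof -
    define n where "n = nat \<lceil>log 2 (D / eps)\<rceil>"
    have "D / eps = 2 powr log 2 (D / eps)"
      using \<open>0 < D\<close> that by simp
    also have "\<dots> \<le> 2 powr real n"
      unfolding n_def by (intro powr_mono real_nat_ceiling_ge) auto
    finally have "D / 2 ^ n \<le> eps"
      using that by (simp add: powr_realpow divide_le_eq mult.commute)
    moreover have "C / 2 ^ n < D / 2 ^ n"
      by (intro divide_strict_right_mono) (auto simp: D_def)
    ultimately have "(LEAST n. Q eps n) \<le> n"
      by (intro Least_le Q that) linarith
    moreover have "real n \<le> \<bar>log 2 (D / eps)\<bar> + 1"
      unfolding n_def by linarith
    ultimately show ?thesis
      by simp
  qed
  have "\<forall>\<^sub>F eps in at_right 0.
      norm (real (Suc (LEAST n. Q eps n))) \<le> 1 * norm (\<bar>log 2 (D / eps)\<bar> + 2)"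
    using eventually_at_right_less[of 0]
  proof eventually_elim
    case (elim eps)
    then show ?case using bound[of eps] by simp
  qed
  then have "(\<lambda>eps. real (Suc (LEAST n. Q eps n))) \<in> O[at_right 0](\<lambda>eps. \<bar>log 2 (D / eps)\<bar> + 2)"
    by (rule bigoI)
  moreover have "(\<lambda>eps. \<bar>log 2 (D / eps)\<bar> + 2) \<in> O[at_right 0](\<lambda>eps. ln (1 / eps))"
    using \<open>0 < D\<close> by real_asymp
  ultimately show ?thesis
    by (rule landau_o.big_trans)
qed

lemma Ssum_mid_error:
  assumes a: "\<And>i. i < N \<Longrightarrow> 0 < a i" and T: "\<And>i. i < N \<Longrightarrow> 0 \<le> T i"
    and "Ptot < (\<Sum>i<N. Pbar a T i)" and doubling: "\<exists>k::nat. Ssum N a T (2 ^ k) \<le> Ptot"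
  obtains C where "\<And>m. \<bar>Ssum N a T (mid N a T Ptot m) - Ptot\<bar> \<le> C / 2 ^ m"
proof -
  define h where "h = hi0 N a T Ptot"
  have "0 < h" "Ssum N a T h \<le> Ptot"
    unfolding h_def hi0_def using LeastI_ex[OF doubling] by auto
  obtain L where L: "L-lipschitz_on {0..} (Ssum_ext N a T)"
    using Ssum_ext_lipschitz[OF a] .
  have "\<bar>Ssum N a T (mid N a T Ptot m) - Ptot\<bar> \<le> L * h / 2 / 2 ^ m" for m
  proof -
    let ?P = "\<lambda>lam. Ptot < Ssum N a T lam"
    obtain lo hi where br: "(bisection ?P ^^ m) (0, h) = (lo, hi)"
      by fastforce
    then have mid: "mid N a T Ptot m = (lo + hi) / 2"
      by (simp add: mid_def bracket_def bisect_step_eq_bisection h_def)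
    have "0 \<le> lo" "0 < hi - lo"
      using bisection_iterate_invariant[OF _ br] \<open>0 < h\<close> by auto
    then have "0 < (lo + hi) / 2"
      by simp
    \<comment> \<open>Ssum is junk at 0 (it divides by lam), so the error is bounded for its extension.\<close>
    have "\<bar>Ssum_ext N a T ((lo + hi) / 2) - Ptot\<bar> \<le> L * (h - 0) / 2 ^ Suc m"
    proof (rule bisection_midpoint_error[OF _ \<open>0 < h\<close> _ _ _ br])
      show "L-lipschitz_on {0..h} (Ssum_ext N a T)"
        using L by (rule lipschitz_on_subset) auto
      show "Ptot < Ssum_ext N a T 0"
        using assms(3) by (simp add: Ssum_ext_zero a T)
      show "Ssum_ext N a T h \<le> Ptot"
        using \<open>Ssum N a T h \<le> Ptot\<close> Ssum_eq_Ssum_ext[OF a \<open>0 < h\<close>] by simp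
    qed (simp add: Ssum_eq_Ssum_ext a)
    with \<open>0 < (lo + hi) / 2\<close> show ?thesis
      by (simp add: mid Ssum_eq_Ssum_ext a)
  qed
  then show ?thesis
    using that by blast
qed

theorem theorem3:
  fixes N :: nat and a T :: "nat \<Rightarrow> real" and Ptot :: real
  assumes "N \<ge> 1"
    and "\<forall>i<N. a i > 0"
    and "\<forall>i<N. T i \<ge> 0"
    and "Ptot > 0"
    and "Ptot < (\<Sum>i<N. Pbar a T i)"
    and "\<exists>i<N. a i > 0 \<and> T i > 0"
  shows "(\<exists>k::nat. Ssum N a T (2 ^ k) \<le> Ptot)
    \<and> (\<forall>eps>0. \<exists>m. stops N a T Ptot eps m)
    \<and> (\<lambda>eps. real (bisect_iters N a T Ptot eps)) \<in> O[at_right 0](\<lambda>eps. ln (1 / eps))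
    \<and> (\<lambda>eps. total_cost N a T Ptot eps) \<in> O[at_right 0](\<lambda>eps. real N * ln (1 / eps))"
proof -
  have a: "\<And>i. i < N \<Longrightarrow> 0 < a i" and T: "\<And>i. i < N \<Longrightarrow> 0 \<le> T i"
    using assms(2,3) by auto
  have doubling: "\<exists>k::nat. Ssum N a T (2 ^ k) \<le> Ptot"
    using ex_Ssum_pow2_le[OF a T] assms(4) by simp
  obtain C where error: "\<And>m. \<bar>Ssum N a T (mid N a T Ptot m) - Ptot\<bar> \<le> C / 2 ^ m"
    using Ssum_mid_error[OF a T assms(5) doubling] by blast
  have stops: "stops N a T Ptot eps m" if "0 < eps" "C / 2 ^ m < eps" for eps m
    using error[of m] that by (simp add: stops_def)
  have "\<exists>m. stops N a T Ptot eps m" if "0 < eps" for eps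
  proof -
    obtain m :: nat where "C / eps < 2 ^ m"
      using real_arch_pow[of 2] by auto
    then show ?thesis
      using stops[OF that] that by (auto simp: field_simps)
  qed
  moreover have iters: "(\<lambda>eps. real (bisect_iters N a T Ptot eps)) \<in> O[at_right 0](\<lambda>eps. ln (1 / eps))"
    unfolding bisect_iters_def using stops by (rule Suc_Least_bigo_ln_if_halving)
  moreover have "(\<lambda>eps. total_cost N a T Ptot eps) \<in> O[at_right 0](\<lambda>eps. real N * ln (1 / eps))"
    unfolding total_cost_def using iters by (rule landau_o.big.mult_left)
  ultimately show ?thesis
    using doubling by blast
qed

end
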